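(* Let $R$ be any difference ring and $F,G\subseteq R$. Then $\langle F\rangle_r\cap\langle G\rangle_r=\langle FG\rangle_r$, where $FG=\{fg:f\in F,g\in G\}$. Consequently, if $I$ and $J$ are $\sigma$-ideals of $R$, then $\langle I\rangle_r\cap\langle J\rangle_r=\langle I\cap J\rangle_r=\langle IJ\rangle_r$.
   Context: A difference ring is a commutative unital ring $R$ with a ring endomorphism $\sigma$. A $\sigma$-ideal is an ideal $I$ with $\sigma(I)\subseteq I$; it is well-mixed if $ab\in I$ implies $a\sigma(b)\in I$. $\langle F\rangle_r$ denotes the smallest radical well-mixed $\sigma$-ideal of $R$ containing $F$. *)

theory Defs
  imports Main
begin

text \<open>A difference ring: a commutative unital ring (type class comm_ring_1)
  together with a ring endomorphism sigma.\<close>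
definition ring_endo :: "('a::comm_ring_1 \<Rightarrow> 'a) \<Rightarrow> bool" where
  "ring_endo \<sigma> \<longleftrightarrow> (\<forall>a b. \<sigma> (a + b) = \<sigma> a + \<sigma> b) \<and>
                     (\<forall>a b. \<sigma> (a * b) = \<sigma> a * \<sigma> b) \<and> \<sigma> 1 = 1"

definition is_ideal :: "'a::comm_ring_1 set \<Rightarrow> bool" where
  "is_ideal I \<longleftrightarrow> 0 \<in> I \<and> (\<forall>a\<in>I. \<forall>b\<in>I. a + b \<in> I) \<and> (\<forall>r a. a \<in> I \<longrightarrow> r * a \<in> I)"

definition sigma_ideal :: "('a::comm_ring_1 \<Rightarrow> 'a) \<Rightarrow> 'a set \<Rightarrow> bool" where
  "sigma_ideal \<sigma> I \<longleftrightarrow> is_ideal I \<and> \<sigma> ` I \<subseteq> I"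

definition well_mixed :: "('a::comm_ring_1 \<Rightarrow> 'a) \<Rightarrow> 'a set \<Rightarrow> bool" where
  "well_mixed \<sigma> I \<longleftrightarrow> (\<forall>a b. a * b \<in> I \<longrightarrow> a * \<sigma> b \<in> I)"

definition radical_ideal :: "'a::comm_ring_1 set \<Rightarrow> bool" where
  "radical_ideal I \<longleftrightarrow> (\<forall>a (n::nat). a ^ n \<in> I \<longrightarrow> a \<in> I)"

definition rwm_sigma_ideal :: "('a::comm_ring_1 \<Rightarrow> 'a) \<Rightarrow> 'a set \<Rightarrow> bool" where
  "rwm_sigma_ideal \<sigma> I \<longleftrightarrow> sigma_ideal \<sigma> I \<and> well_mixed \<sigma> I \<and> radical_ideal I"

definition rwm_closure :: "('a::comm_ring_1 \<Rightarrow> 'a) \<Rightarrow> 'a set \<Rightarrow> 'a set" where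
  "rwm_closure \<sigma> F = \<Inter> {I. rwm_sigma_ideal \<sigma> I \<and> F \<subseteq> I}"

definition set_prod :: "'a::comm_ring_1 set \<Rightarrow> 'a set \<Rightarrow> 'a set" where
  "set_prod F G = {f * g | f g. f \<in> F \<and> g \<in> G}"

end

theory Submission
  imports Defs
begin

text \<open>For a radical well-mixed \<open>\<sigma>\<close>-ideal \<open>K\<close> and any \<open>a\<close>, the colon ideal \<open>(K : a)\<close> is again
  a radical well-mixed \<open>\<sigma>\<close>-ideal. With \<open>K = \<langle>FG\<rangle>\<^sub>r\<close> this gives \<open>F \<subseteq> (K : g)\<close>, hence
  \<open>\<langle>F\<rangle>\<^sub>r g \<subseteq> K\<close> for \<open>g \<in> G\<close>, and by the same argument in the other factor
  \<open>\<langle>F\<rangle>\<^sub>r \<langle>G\<rangle>\<^sub>r \<subseteq> K\<close>. An element of \<open>\<langle>F\<rangle>\<^sub>r \<inter> \<langle>G\<rangle>\<^sub>r\<close> then has its square in \<open>K\<close>,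
  so lies in \<open>K\<close> because \<open>K\<close> is radical. The converse inclusion and the statements about
  \<open>\<sigma>\<close>-ideals \<open>I, J\<close> follow from \<open>IJ \<subseteq> I \<inter> J\<close>. Neither argument uses that \<open>\<sigma>\<close> is
  a ring endomorphism.\<close>

lemma is_idealD:
  assumes "is_ideal I"
  shows is_ideal_zero: "0 \<in> I"
    and is_ideal_add: "a \<in> I \<Longrightarrow> b \<in> I \<Longrightarrow> a + b \<in> I"
    and is_ideal_mult_left: "a \<in> I \<Longrightarrow> r * a \<in> I"
    and is_ideal_mult_right: "a \<in> I \<Longrightarrow> a * r \<in> I"
  using assms unfolding is_ideal_def by (auto simp: mult.commute[of a r])

lemma rwm_sigma_idealD:
  assumes "rwm_sigma_ideal \<sigma> K"
  shows rwm_sigma_ideal_is_ideal: "is_ideal K"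
    and rwm_sigma_ideal_well_mixed: "a * b \<in> K \<Longrightarrow> a * \<sigma> b \<in> K"
    and rwm_sigma_ideal_radical: "a ^ n \<in> K \<Longrightarrow> a \<in> K"
  using assms
  unfolding rwm_sigma_ideal_def sigma_ideal_def well_mixed_def radical_ideal_def by auto

lemma rwm_sigma_ideal_Inter:
  assumes "\<And>I. I \<in> S \<Longrightarrow> rwm_sigma_ideal \<sigma> I"
  shows "rwm_sigma_ideal \<sigma> (\<Inter> S)"
proof -
  have I: "is_ideal I" "\<sigma> ` I \<subseteq> I" "well_mixed \<sigma> I" "radical_ideal I" if "I \<in> S" for I
    using assms[OF that] unfolding rwm_sigma_ideal_def sigma_ideal_def by auto
  have "is_ideal (\<Inter> S)"
    using I(1) unfolding is_ideal_def by blast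
  moreover have "\<sigma> ` \<Inter> S \<subseteq> \<Inter> S"
    using I(2) by blast
  moreover have "well_mixed \<sigma> (\<Inter> S)"
    using I(3) unfolding well_mixed_def by blast
  moreover have "radical_ideal (\<Inter> S)"
    using I(4) unfolding radical_ideal_def by blast
  ultimately show ?thesis unfolding rwm_sigma_ideal_def sigma_ideal_def by blast
qed

lemma rwm_sigma_ideal_Int:
  "rwm_sigma_ideal \<sigma> I \<Longrightarrow> rwm_sigma_ideal \<sigma> J \<Longrightarrow> rwm_sigma_ideal \<sigma> (I \<inter> J)"
  using rwm_sigma_ideal_Inter[of "{I, J}" \<sigma>] by auto

lemma rwm_sigma_ideal_rwm_closure: "rwm_sigma_ideal \<sigma> (rwm_closure \<sigma> F)"
  unfolding rwm_closure_def by (rule rwm_sigma_ideal_Inter) blast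

lemma rwm_closure_superset: "F \<subseteq> rwm_closure \<sigma> F"
  unfolding rwm_closure_def by blast

lemma rwm_closure_least: "rwm_sigma_ideal \<sigma> K \<Longrightarrow> F \<subseteq> K \<Longrightarrow> rwm_closure \<sigma> F \<subseteq> K"
  unfolding rwm_closure_def by blast

lemma rwm_closure_mono: "F \<subseteq> G \<Longrightarrow> rwm_closure \<sigma> F \<subseteq> rwm_closure \<sigma> G"
  using rwm_closure_least[OF rwm_sigma_ideal_rwm_closure] rwm_closure_superset by blast

lemma set_prod_subset_Int:
  assumes "is_ideal I" "is_ideal J"
  shows "set_prod I J \<subseteq> I \<inter> J"
  using is_ideal_mult_right[OF assms(1)] is_ideal_mult_left[OF assms(2)]
  unfolding set_prod_def by blast

definition ideal_colon :: "'a::comm_ring_1 set \<Rightarrow> 'a \<Rightarrow> 'a set" where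
  "ideal_colon K a = {x. x * a \<in> K}"

lemma is_ideal_colon:
  assumes "is_ideal K"
  shows "is_ideal (ideal_colon K a)"
  using is_idealD[OF assms]
  unfolding is_ideal_def ideal_colon_def by (simp add: distrib_right mult.assoc)

lemma radical_ideal_colon:
  assumes "is_ideal K" "radical_ideal K"
  shows "radical_ideal (ideal_colon K a)"
  unfolding radical_ideal_def ideal_colon_def
proof (intro allI impI CollectI)
  fix u and n :: nat
  assume "u ^ n \<in> {x. x * a \<in> K}"
  then have "(a ^ n * u) * (u ^ n * a) \<in> K"
    using is_ideal_mult_left[OF assms(1)] by simp
  moreover have "(a ^ n * u) * (u ^ n * a) = (u * a) ^ Suc n"
    by (simp add: power_mult_distrib ac_simps)
  ultimately show "u * a \<in> K"
    using assms(2) unfolding radical_ideal_def by metis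
qed

lemma rwm_sigma_ideal_colon:
  assumes K: "rwm_sigma_ideal \<sigma> K"
  shows "rwm_sigma_ideal \<sigma> (ideal_colon K a)"
proof -
  note wm = rwm_sigma_ideal_well_mixed[OF K]
  \<comment> \<open>\<open>\<sigma>\<close>-stability of the colon comes from well-mixedness of \<open>K\<close>, not from \<open>\<sigma> K \<subseteq> K\<close>.\<close>
  have "\<sigma> x \<in> ideal_colon K a" if "x \<in> ideal_colon K a" for x
    using wm[of a x] that unfolding ideal_colon_def by (simp add: mult.commute)
  moreover have "well_mixed \<sigma> (ideal_colon K a)"
    unfolding well_mixed_def ideal_colon_def
    using wm[of "_ * a"] by (simp add: ac_simps)
  moreover have "is_ideal K" and "radical_ideal K"
    using K unfolding rwm_sigma_ideal_def sigma_ideal_def by auto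
  ultimately show ?thesis
    using is_ideal_colon radical_ideal_colon
    unfolding rwm_sigma_ideal_def sigma_ideal_def by blast
qed

lemma rwm_closure_colon:
  assumes "rwm_sigma_ideal \<sigma> K" "\<And>f. f \<in> F \<Longrightarrow> f * a \<in> K" "x \<in> rwm_closure \<sigma> F"
  shows "x * a \<in> K"
  using rwm_closure_least[OF rwm_sigma_ideal_colon[OF assms(1)], of F a] assms(2,3)
  unfolding ideal_colon_def by blast

lemma mult_mem_rwm_closure_set_prod:
  assumes "x \<in> rwm_closure \<sigma> F" "y \<in> rwm_closure \<sigma> G"
  shows "x * y \<in> rwm_closure \<sigma> (set_prod F G)"
proof -
  let ?K = "rwm_closure \<sigma> (set_prod F G)"
  have K: "rwm_sigma_ideal \<sigma> ?K" by (rule rwm_sigma_ideal_rwm_closure)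
  have "f * g \<in> ?K" if "f \<in> F" "g \<in> G" for f g
    using rwm_closure_superset[of "set_prod F G" \<sigma>] that unfolding set_prod_def by blast
  then have "x * g \<in> ?K" if "g \<in> G" for g
    using rwm_closure_colon[OF K _ assms(1)] that by blast
  then have "y * x \<in> ?K"
    using rwm_closure_colon[OF K _ assms(2)] by (metis mult.commute)
  then show ?thesis by (simp add: mult.commute)
qed

lemma rwm_closure_Int_eq_set_prod:
  "rwm_closure \<sigma> F \<inter> rwm_closure \<sigma> G = rwm_closure \<sigma> (set_prod F G)"
proof
  show "rwm_closure \<sigma> F \<inter> rwm_closure \<sigma> G \<subseteq> rwm_closure \<sigma> (set_prod F G)"
  proof
    fix y assume "y \<in> rwm_closure \<sigma> F \<inter> rwm_closure \<sigma> G"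
    then have "y ^ 2 \<in> rwm_closure \<sigma> (set_prod F G)"
      using mult_mem_rwm_closure_set_prod[of y \<sigma> F y G] by (simp add: power2_eq_square)
    then show "y \<in> rwm_closure \<sigma> (set_prod F G)"
      by (rule rwm_sigma_ideal_radical[OF rwm_sigma_ideal_rwm_closure])
  qed
next
  have "set_prod F G \<subseteq> rwm_closure \<sigma> F \<inter> rwm_closure \<sigma> G"
    using rwm_closure_superset[of F \<sigma>] rwm_closure_superset[of G \<sigma>]
      set_prod_subset_Int[of "rwm_closure \<sigma> F" "rwm_closure \<sigma> G"]
      rwm_sigma_ideal_is_ideal[OF rwm_sigma_ideal_rwm_closure]
    unfolding set_prod_def by blast
  then show "rwm_closure \<sigma> (set_prod F G) \<subseteq> rwm_closure \<sigma> F \<inter> rwm_closure \<sigma> G"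
    by (intro rwm_closure_least rwm_sigma_ideal_Int rwm_sigma_ideal_rwm_closure)
qed

lemma rwm_closure_Int_eq_set_prod_ideal:
  assumes "is_ideal I" "is_ideal J"
  shows "rwm_closure \<sigma> (I \<inter> J) = rwm_closure \<sigma> (set_prod I J)"
proof
  show "rwm_closure \<sigma> (set_prod I J) \<subseteq> rwm_closure \<sigma> (I \<inter> J)"
    by (rule rwm_closure_mono[OF set_prod_subset_Int[OF assms]])
  have "I \<inter> J \<subseteq> rwm_closure \<sigma> (set_prod I J)"
    using rwm_closure_Int_eq_set_prod[of \<sigma> I J] rwm_closure_superset[of I \<sigma>]
      rwm_closure_superset[of J \<sigma>] by blast
  then show "rwm_closure \<sigma> (I \<inter> J) \<subseteq> rwm_closure \<sigma> (set_prod I J)"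
    by (rule rwm_closure_least[OF rwm_sigma_ideal_rwm_closure])
qed

theorem proposition5p2:
  fixes \<sigma> :: "'a::comm_ring_1 \<Rightarrow> 'a"
  assumes "ring_endo \<sigma>"
  shows "(\<forall>F G. rwm_closure \<sigma> F \<inter> rwm_closure \<sigma> G = rwm_closure \<sigma> (set_prod F G)) \<and>
         (\<forall>I J. sigma_ideal \<sigma> I \<and> sigma_ideal \<sigma> J \<longrightarrow>
             rwm_closure \<sigma> I \<inter> rwm_closure \<sigma> J = rwm_closure \<sigma> (I \<inter> J) \<and>
             rwm_closure \<sigma> (I \<inter> J) = rwm_closure \<sigma> (set_prod I J))"
proof (intro conjI allI impI)
  fix F G
  show "rwm_closure \<sigma> F \<inter> rwm_closure \<sigma> G = rwm_closure \<sigma> (set_prod F G)"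
    by (rule rwm_closure_Int_eq_set_prod)
next
  fix I J :: "'a set"
  assume "sigma_ideal \<sigma> I \<and> sigma_ideal \<sigma> J"
  then have "is_ideal I" "is_ideal J" unfolding sigma_ideal_def by auto
  then show "rwm_closure \<sigma> (I \<inter> J) = rwm_closure \<sigma> (set_prod I J)"
    and "rwm_closure \<sigma> I \<inter> rwm_closure \<sigma> J = rwm_closure \<sigma> (I \<inter> J)"
    using rwm_closure_Int_eq_set_prod_ideal rwm_closure_Int_eq_set_prod by metis+
qed

end
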